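(* Let $\sigma'\in\Sigma_{E_N}$, $\beta\in[0,\infty]$ and $\kappa\ge0$. Then $\mu_{N,\beta,\kappa}(\{\sigma\in\Sigma_{E_N}:\sigma'\le\sigma\})\le\varphi_{\beta,\kappa}(\sigma')$.
   Context: $G=\mathbb Z_n$, $\rho$ a faithful unitary one-dimensional representation. On $\mathbb Z^4$, $E_N,P_N$ are the oriented edges/plaquettes with vertices in $B_N=[-N,N]^4\cap\mathbb Z^4$; $\partial p$ the oriented boundary edges of $p$. $\Sigma_{E_N}$: $\sigma:E_N\to G$ with $\sigma_{-e}=-\sigma_e$; $(d\sigma)_p=\sum_{e\in\partial p}\sigma_e$. For $r\ge0$, $\varphi_r(g)=e^{r(\mathrm{Re}\rho(g)-1)}$, $\varphi_\infty(g)=\mathbb 1_{g=0}$; $\varphi_{\beta,\kappa}(\sigma)=\prod_{e\in E_N}\varphi_\kappa(\sigma_e)\prod_{p\in P_N}\varphi_\beta((d\sigma)_p)$. $\mu_{N,\beta,\kappa}(\sigma)=\varphi_{\beta,\kappa}(\sigma)/\sum_{\sigma''\in\Sigma_{E_N}}\varphi_{\beta,\kappa}(\sigma'')$ (for $\beta<\infty$ this is $\propto\exp(\beta\sum_p\rho((d\sigma)_p)+\kappa\sum_e\rho(\sigma_e))$; for $\beta=\infty$ it is supported on $d\sigma=0$). Partial order: $\sigma'\le\sigma$ iff $\sigma'=\sigma|_{\mathrm{supp}\,\sigma'}$ and $d\sigma'=(d\sigma)|_{\mathrm{supp}\,d\sigma'}$. *)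

theory Defs
  imports "HOL-Library.Extended_Real"
begin

(* Vertices of Z^4: functions nat => int, coordinates 0..3, zero elsewhere. *)
type_synonym vertex = "nat \<Rightarrow> int"
type_synonym edge = "vertex \<times> vertex"
(* oriented plaquette (x,i,j): base point x, first direction i, second j (i \<noteq> j);
   (x,j,i) is the same plaquette with opposite orientation *)
type_synonym plaq = "vertex \<times> nat \<times> nat"

definition shift :: "vertex \<Rightarrow> nat \<Rightarrow> vertex" where
  "shift x i = (\<lambda>k. x k + (if k = i then 1 else 0))"

definition box :: "nat \<Rightarrow> vertex set" where
  "box N = {x. (\<forall>k<4. \<bar>x k\<bar> \<le> int N) \<and> (\<forall>k\<ge>4. x k = 0)}"

(* oriented edges with both endpoints in B_N; -(x,y) = (y,x) *)
definition edges :: "nat \<Rightarrow> edge set" where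
  "edges N = {(x,y). x \<in> box N \<and> y \<in> box N \<and> (\<exists>i<4. y = shift x i \<or> x = shift y i)}"

definition plaq_vertices :: "plaq \<Rightarrow> vertex list" where
  "plaq_vertices p = (case p of (x,i,j) \<Rightarrow> [x, shift x i, shift (shift x i) j, shift x j])"

definition plaqs :: "nat \<Rightarrow> plaq set" where
  "plaqs N = {(x,i,j). i < 4 \<and> j < 4 \<and> i \<noteq> j \<and> set (plaq_vertices (x,i,j)) \<subseteq> box N}"

definition bdry :: "plaq \<Rightarrow> edge list" where
  "bdry p = (case p of (x,i,j) \<Rightarrow>
     [(x, shift x i), (shift x i, shift (shift x i) j), (shift (shift x i) j, shift x j), (shift x j, x)])"

(* G = Z_n, elements represented by 0..n-1; a configuration is a map edges -> G,
   extended by 0 outside E_N, with sigma(-e) = -sigma(e) *)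
definition configs :: "nat \<Rightarrow> nat \<Rightarrow> (edge \<Rightarrow> int) set" where
  "configs n N = {\<sigma>. (\<forall>e. \<sigma> e \<in> {0..<int n}) \<and> (\<forall>e. e \<notin> edges N \<longrightarrow> \<sigma> e = 0)
      \<and> (\<forall>x y. (x,y) \<in> edges N \<longrightarrow> \<sigma> (y,x) = (- \<sigma> (x,y)) mod int n)}"

definition dd :: "nat \<Rightarrow> (edge \<Rightarrow> int) \<Rightarrow> plaq \<Rightarrow> int" where
  "dd n \<sigma> p = (\<Sum>e\<leftarrow>bdry p. \<sigma> e) mod int n"

(* faithful one-dimensional unitary representation of Z_n, as a function on int
   (homomorphism Z -> U(1) with kernel exactly nZ) *)
definition faithful_rep :: "nat \<Rightarrow> (int \<Rightarrow> complex) \<Rightarrow> bool" where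
  "faithful_rep n \<rho> \<longleftrightarrow> (\<forall>a b. \<rho> (a + b) = \<rho> a * \<rho> b) \<and> (\<forall>a. cmod (\<rho> a) = 1)
      \<and> (\<forall>a. \<rho> a = 1 \<longleftrightarrow> int n dvd a)"

definition phi :: "nat \<Rightarrow> (int \<Rightarrow> complex) \<Rightarrow> ereal \<Rightarrow> int \<Rightarrow> real" where
  "phi n \<rho> r g = (if r = \<infinity> then (if g mod int n = 0 then 1 else 0)
                   else exp (real_of_ereal r * (Re (\<rho> g) - 1)))"

definition phi_bk :: "nat \<Rightarrow> (int \<Rightarrow> complex) \<Rightarrow> nat \<Rightarrow> ereal \<Rightarrow> real \<Rightarrow> (edge \<Rightarrow> int) \<Rightarrow> real" where
  "phi_bk n \<rho> N \<beta> \<kappa> \<sigma> =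
     (\<Prod>e\<in>edges N. phi n \<rho> (ereal \<kappa>) (\<sigma> e)) * (\<Prod>p\<in>plaqs N. phi n \<rho> \<beta> (dd n \<sigma> p))"

definition mu :: "nat \<Rightarrow> (int \<Rightarrow> complex) \<Rightarrow> nat \<Rightarrow> ereal \<Rightarrow> real \<Rightarrow> (edge \<Rightarrow> int) set \<Rightarrow> real" where
  "mu n \<rho> N \<beta> \<kappa> A =
     (\<Sum>\<sigma>\<in>A \<inter> configs n N. phi_bk n \<rho> N \<beta> \<kappa> \<sigma>) / (\<Sum>\<sigma>\<in>configs n N. phi_bk n \<rho> N \<beta> \<kappa> \<sigma>)"

definition supp_edges :: "nat \<Rightarrow> (edge \<Rightarrow> int) \<Rightarrow> edge set" where
  "supp_edges N \<sigma> = {e \<in> edges N. \<sigma> e \<noteq> 0}"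

definition supp_plaqs :: "nat \<Rightarrow> nat \<Rightarrow> (edge \<Rightarrow> int) \<Rightarrow> plaq set" where
  "supp_plaqs n N \<sigma> = {p \<in> plaqs N. dd n \<sigma> p \<noteq> 0}"

definition config_le :: "nat \<Rightarrow> nat \<Rightarrow> (edge \<Rightarrow> int) \<Rightarrow> (edge \<Rightarrow> int) \<Rightarrow> bool" where
  "config_le n N \<sigma>' \<sigma> \<longleftrightarrow> (\<forall>e\<in>supp_edges N \<sigma>'. \<sigma>' e = \<sigma> e)
      \<and> (\<forall>p\<in>supp_plaqs n N \<sigma>'. dd n \<sigma>' p = dd n \<sigma> p)"

end

theory Submission
  imports Defs
begin

text \<open>If \<open>\<sigma>' \<le> \<sigma>\<close>, then on every edge and every plaquette either \<open>\<sigma>'\<close> or \<open>\<sigma> - \<sigma>'\<close>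
  vanishes, so the weight factorises as \<open>\<phi>(\<sigma>) = \<phi>(\<sigma>') \<phi>(\<sigma> - \<sigma>')\<close>. Since \<open>\<sigma> \<mapsto> \<sigma> - \<sigma>'\<close> is
  injective, summing over all \<open>\<sigma> \<ge> \<sigma>'\<close> gives at most \<open>\<phi>(\<sigma>') Z\<close>, where \<open>Z\<close> is the partition
  function; and \<open>Z \<ge> \<phi>(0) = 1\<close>.\<close>

definition config_diff :: "nat \<Rightarrow> (edge \<Rightarrow> int) \<Rightarrow> (edge \<Rightarrow> int) \<Rightarrow> edge \<Rightarrow> int" where
  "config_diff n \<sigma> \<sigma>' = (\<lambda>e. (\<sigma> e - \<sigma>' e) mod int n)"

lemma sum_list_mod_diff:
  fixes m :: int
  shows "(\<Sum>e\<leftarrow>l. (f e - g e) mod m) mod m = ((\<Sum>e\<leftarrow>l. f e) - (\<Sum>e\<leftarrow>l. g e)) mod m"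
proof (induction l)
  case Nil
  then show ?case by simp
next
  case (Cons a l)
  have "(\<Sum>e\<leftarrow>a#l. (f e - g e) mod m) mod m
      = ((f a - g a) mod m + (\<Sum>e\<leftarrow>l. (f e - g e) mod m) mod m) mod m"
    by (simp only: list.map sum_list.Cons) (metis mod_add_right_eq)
  also have "\<dots> = ((f a - g a) + ((\<Sum>e\<leftarrow>l. f e) - (\<Sum>e\<leftarrow>l. g e))) mod m"
    using Cons by (metis mod_add_eq)
  also have "\<dots> = ((\<Sum>e\<leftarrow>a#l. f e) - (\<Sum>e\<leftarrow>a#l. g e)) mod m"
    by (simp add: algebra_simps)
  finally show ?case .
qed

lemma dd_config_diff: "dd n (config_diff n \<sigma> \<sigma>') p = (dd n \<sigma> p - dd n \<sigma>' p) mod int n"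
  unfolding dd_def config_diff_def by (simp add: sum_list_mod_diff mod_diff_eq)

lemma config_diff_in_configs:
  assumes "n \<ge> 1" and "\<sigma> \<in> configs n N" and "\<sigma>' \<in> configs n N"
  shows "config_diff n \<sigma> \<sigma>' \<in> configs n N"
proof -
  have antisym: "(\<sigma> (y,x) - \<sigma>' (y,x)) mod int n = (- ((\<sigma> (x,y) - \<sigma>' (x,y)) mod int n)) mod int n"
    if "(x,y) \<in> edges N" for x y
  proof -
    have reverse: "\<sigma> (y,x) = (- \<sigma> (x,y)) mod int n" "\<sigma>' (y,x) = (- \<sigma>' (x,y)) mod int n"
      using assms(2,3) that unfolding configs_def by blast+
    have "(\<sigma> (y,x) - \<sigma>' (y,x)) mod int n = (- \<sigma> (x,y) - - \<sigma>' (x,y)) mod int n"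
      unfolding reverse by (rule mod_diff_eq)
    also have "\<dots> = (- (\<sigma> (x,y) - \<sigma>' (x,y))) mod int n" by (simp add: algebra_simps)
    also have "\<dots> = (- ((\<sigma> (x,y) - \<sigma>' (x,y)) mod int n)) mod int n"
      by (rule mod_minus_eq[symmetric])
    finally show ?thesis .
  qed
  have "\<sigma> e = 0" "\<sigma>' e = 0" if "e \<notin> edges N" for e
    using assms(2,3) that unfolding configs_def by blast+
  then show ?thesis
    using antisym assms(1) unfolding configs_def config_diff_def by auto
qed

lemma inj_on_config_diff:
  "inj_on (\<lambda>\<sigma>. config_diff n \<sigma> \<sigma>') (configs n N)"
proof (rule inj_onI)
  fix a b assume a: "a \<in> configs n N" and b: "b \<in> configs n N"
    and eq: "config_diff n a \<sigma>' = config_diff n b \<sigma>'"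
  show "a = b"
  proof
    fix e
    have range: "a e \<in> {0..<int n}" "b e \<in> {0..<int n}"
      using a b unfolding configs_def by blast+
    have "(a e - \<sigma>' e) mod int n = (b e - \<sigma>' e) mod int n"
      using eq unfolding config_diff_def by metis
    then have "(a e - \<sigma>' e + \<sigma>' e) mod int n = (b e - \<sigma>' e + \<sigma>' e) mod int n"
      by (metis mod_add_left_eq)
    then show "a e = b e" using range by simp
  qed
qed

lemma phi_zero:
  assumes "faithful_rep n \<rho>"
  shows "phi n \<rho> r 0 = 1"
proof -
  have "\<rho> 0 = 1" using assms unfolding faithful_rep_def by simp
  then show ?thesis unfolding phi_def by simp
qed

lemma phi_nonneg: "phi n \<rho> r g \<ge> 0"
  unfolding phi_def by auto

lemma phi_bk_nonneg: "phi_bk n \<rho> N \<beta> \<kappa> \<sigma> \<ge> 0"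
  unfolding phi_bk_def by (intro mult_nonneg_nonneg prod_nonneg) (auto simp: phi_nonneg)

lemma phi_bk_zero:
  assumes "faithful_rep n \<rho>"
  shows "phi_bk n \<rho> N \<beta> \<kappa> (\<lambda>e. 0) = 1"
  unfolding phi_bk_def dd_def using phi_zero[OF assms] by simp

lemma phi_bk_config_diff:
  assumes fr: "faithful_rep n \<rho>" and "\<sigma> \<in> configs n N" and le: "config_le n N \<sigma>' \<sigma>"
  shows "phi_bk n \<rho> N \<beta> \<kappa> \<sigma> = phi_bk n \<rho> N \<beta> \<kappa> \<sigma>' * phi_bk n \<rho> N \<beta> \<kappa> (config_diff n \<sigma> \<sigma>')"
proof -
  let ?\<tau> = "config_diff n \<sigma> \<sigma>'"
  have edge: "phi n \<rho> (ereal \<kappa>) (\<sigma> e) = phi n \<rho> (ereal \<kappa>) (\<sigma>' e) * phi n \<rho> (ereal \<kappa>) (?\<tau> e)"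
    if "e \<in> edges N" for e
  proof (cases "\<sigma>' e = 0")
    case True
    have "\<sigma> e \<in> {0..<int n}" using assms(2) unfolding configs_def by blast
    then have "?\<tau> e = \<sigma> e" using True unfolding config_diff_def by simp
    then show ?thesis using True phi_zero[OF fr] by simp
  next
    case False
    then have "\<sigma>' e = \<sigma> e" using that le unfolding config_le_def supp_edges_def by blast
    then show ?thesis using phi_zero[OF fr] by (simp add: config_diff_def)
  qed
  have plaq: "phi n \<rho> \<beta> (dd n \<sigma> p) = phi n \<rho> \<beta> (dd n \<sigma>' p) * phi n \<rho> \<beta> (dd n ?\<tau> p)"
    if "p \<in> plaqs N" for p
  proof (cases "dd n \<sigma>' p = 0")
    case True
    then have "dd n ?\<tau> p = dd n \<sigma> p mod int n" by (simp add: dd_config_diff)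
    also have "\<dots> = dd n \<sigma> p" by (simp add: dd_def)
    finally have "dd n ?\<tau> p = dd n \<sigma> p" .
    then show ?thesis using True phi_zero[OF fr] by simp
  next
    case False
    then have "dd n \<sigma>' p = dd n \<sigma> p" using that le unfolding config_le_def supp_plaqs_def by blast
    then show ?thesis using phi_zero[OF fr] by (simp add: dd_config_diff)
  qed
  show ?thesis
    unfolding phi_bk_def using edge plaq by (simp add: prod.distrib algebra_simps cong: prod.cong)
qed

lemma partition_function_ge_one:
  assumes "n \<ge> 1" and "faithful_rep n \<rho>" and "finite (configs n N)"
  shows "1 \<le> (\<Sum>\<sigma>\<in>configs n N. phi_bk n \<rho> N \<beta> \<kappa> \<sigma>)"
proof -
  have "(\<lambda>e. 0) \<in> configs n N" using assms(1) unfolding configs_def by auto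
  then show ?thesis
    using member_le_sum[OF _ _ assms(3), of _ "phi_bk n \<rho> N \<beta> \<kappa>"]
      phi_bk_zero[OF assms(2)] phi_bk_nonneg by metis
qed

theorem mainTheorem9:
  fixes n N :: nat and \<rho> :: "int \<Rightarrow> complex" and \<beta> :: ereal and \<kappa> :: real
    and \<sigma>' :: "edge \<Rightarrow> int"
  assumes "n \<ge> 1" and "faithful_rep n \<rho>"
    and "\<sigma>' \<in> configs n N" and "0 \<le> \<beta>" and "0 \<le> \<kappa>"
  shows "mu n \<rho> N \<beta> \<kappa> {\<sigma> \<in> configs n N. config_le n N \<sigma>' \<sigma>} \<le> phi_bk n \<rho> N \<beta> \<kappa> \<sigma>'"
proof (cases "finite (configs n N)")
  case False
  then show ?thesis unfolding mu_def using phi_bk_nonneg by simp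
next
  case fin: True
  let ?A = "{\<sigma> \<in> configs n N. config_le n N \<sigma>' \<sigma>}"
  let ?f = "phi_bk n \<rho> N \<beta> \<kappa>"
  let ?Z = "\<Sum>\<tau>\<in>configs n N. ?f \<tau>"
  let ?T = "\<lambda>\<sigma>. config_diff n \<sigma> \<sigma>'"
  have inj: "inj_on ?T ?A" by (rule inj_on_subset[OF inj_on_config_diff]) auto
  have "(\<Sum>\<sigma>\<in>?A. ?f \<sigma>) = ?f \<sigma>' * (\<Sum>\<sigma>\<in>?A. ?f (?T \<sigma>))"
    using phi_bk_config_diff[OF assms(2)] by (auto simp: sum_distrib_left intro!: sum.cong)
  also have "(\<Sum>\<sigma>\<in>?A. ?f (?T \<sigma>)) = (\<Sum>\<tau>\<in>?T ` ?A. ?f \<tau>)"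
    by (simp add: sum.reindex[OF inj])
  also have "\<dots> \<le> ?Z"
    using fin config_diff_in_configs[OF assms(1) _ assms(3)]
    by (intro sum_mono2) (auto simp: phi_bk_nonneg)
  finally have "(\<Sum>\<sigma>\<in>?A. ?f \<sigma>) \<le> ?f \<sigma>' * ?Z"
    using phi_bk_nonneg by (simp add: mult_left_mono)
  moreover have "1 \<le> ?Z" using partition_function_ge_one[OF assms(1,2) fin] .
  ultimately show ?thesis
    unfolding mu_def by (simp add: Int_absorb2 divide_le_eq)
qed

end
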